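(* Let $C$ be a smooth projective curve of genus two defined over $\mathbb{Q}$ by a globally minimal Weierstrass equation of the form $y^2+Q(x)y=P(x)$, where $P(x),Q(x)\in\mathbb{Z}[x]$, $\deg Q(x)\le 2$ and $P(x)$ is monic of degree $5$, with odd discriminant $\Delta$. Assume moreover that $C$ has at least two $\mathbb{Q}$-rational Weierstrass points. Then $C$ can be described by a Weierstrass equation of the form $E:\ y^2=xF(x)$, where $F(x)\in\mathbb{Z}[x]$ is a monic polynomial of degree $4$, and $\Delta_E=2^{40}\Delta$. In particular, $E$ is minimal over $\mathbb{Z}_p$ for every prime $p\neq 2$.
   Context: A Weierstrass equation of a genus two curve $C$ over a field $K$ of characteristic $\neq 2$ is an equation $y^2+Q(x)y=P(x)$ with $P,Q\in K[x]$, $\deg Q\le 3$, $\deg P\le 6$, such that $x$ generates the subfield of $K(C)$ fixed by the hyperelliptic involution and $K(C)=K(x)[y]$. Its discriminant is $\Delta_E=2^{-12}\operatorname{disc}(4P(x)+Q(x)^2)$. Two Weierstrass equations describe the same curve iff they are related by a change of variables $u=(ax+b)/(cx+d)$, $v=(ey+H(x))/(cx+d)^3$ with $\begin{pmatrix}a&b\\c&d\end{pmatrix}\in\mathrm{GL}_2(K)$, $e\in K^\times$, $H\in K[x]$; then $\Delta_{E'}=e^{20}(ad-bc)^{-30}\Delta_E$. Over a discrete valuation ring $\mathcal{O}_K$, a Weierstrass equation is integral if $P,Q\in\mathcal{O}_K[x]$, and minimal if it is integral and the valuation of its discriminant is smallest among all integral Weierstrass equations describing $C$. Over $\mathbb{Q}$,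 a Weierstrass equation is globally minimal if it is minimal over $\mathbb{Z}_p$ for every prime $p$; the discriminant of $C$ is the discriminant of a globally minimal equation. Weierstrass points of $C$ are the fixed points of the hyperelliptic involution; they are $\mathbb{Q}$-rational if defined over $\mathbb{Q}$. *)

theory Defs
  imports "HOL-Computational_Algebra.Computational_Algebra" "Subresultants.Resultant_Prelim"
begin

(* A Weierstrass equation  y^2 + Q(x) y = P(x)  over Q is encoded by the pair (P, Q). *)
type_synonym weq = "rat poly \<times> rat poly"

definition poly_disc :: "rat poly \<Rightarrow> rat" where
  "poly_disc f = (let n = degree f in
      (-1) ^ (n * (n - 1) div 2) * resultant f (pderiv f) / lead_coeff f)"

(* Discriminant of f viewed as a binary form of degree 6 (degree of f at most 6). *)
definition sextic_disc :: "rat poly \<Rightarrow> rat" where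
  "sextic_disc f = (if degree f = 6 then poly_disc f
                    else if degree f = 5 then (lead_coeff f)^2 * poly_disc f
                    else 0)"

definition weq_disc :: "weq \<Rightarrow> rat" where
  "weq_disc E = sextic_disc (Polynomial.smult 4 (fst E) + (snd E)^2) / 2 ^ 12"

(* Weierstrass equation of a genus two curve: deg Q <= 3, deg P <= 6, nonzero discriminant
   (equivalently 4P+Q^2 is squarefree of degree 5 or 6). *)
definition is_weq :: "weq \<Rightarrow> bool" where
  "is_weq E \<longleftrightarrow> degree (snd E) \<le> 3 \<and> degree (fst E) \<le> 6 \<and> weq_disc E \<noteq> 0"

(* (c x + d)^n f((a x + b)/(c x + d)) for deg f <= n *)
definition hom_subst :: "nat \<Rightarrow> rat \<Rightarrow> rat \<Rightarrow> rat \<Rightarrow> rat \<Rightarrow> rat poly \<Rightarrow> rat poly" where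
  "hom_subst n a b c d f =
     (\<Sum>i\<le>n. Polynomial.smult (coeff f i) ([:b, a:] ^ i * [:d, c:] ^ (n - i)))"

(* E' (in variables u, v) is obtained from E (in variables x, y) by the change of variables
   u = (a x + b)/(c x + d),  v = (e y + H(x))/(c x + d)^3:
   substituting into v^2 + Q'(u) v - P'(u) and multiplying by (c x + d)^6 gives
   e^2 (y^2 + Q(x) y - P(x)). *)
definition weq_change :: "rat \<Rightarrow> rat \<Rightarrow> rat \<Rightarrow> rat \<Rightarrow> rat \<Rightarrow> rat poly \<Rightarrow> weq \<Rightarrow> weq \<Rightarrow> bool" where
  "weq_change a b c d e H E E' \<longleftrightarrow>
     a * d - b * c \<noteq> 0 \<and> e \<noteq> 0 \<and>
     Polynomial.smult 2 H + hom_subst 3 a b c d (snd E') = Polynomial.smult e (snd E) \<and>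
     H^2 + hom_subst 3 a b c d (snd E') * H - hom_subst 6 a b c d (fst E')
       = - Polynomial.smult (e^2) (fst E)"

definition same_curve :: "weq \<Rightarrow> weq \<Rightarrow> bool" where
  "same_curve E E' \<longleftrightarrow> (\<exists>a b c d e H. weq_change a b c d e H E E')"

definition rat_val :: "nat \<Rightarrow> rat \<Rightarrow> int" where
  "rat_val p q = (case quotient_of q of (n, m) \<Rightarrow>
      int (multiplicity (int p) n) - int (multiplicity (int p) m))"

definition p_integral :: "nat \<Rightarrow> rat \<Rightarrow> bool" where
  "p_integral p q \<longleftrightarrow> \<not> (int p dvd snd (quotient_of q))"

definition integral_at :: "nat \<Rightarrow> weq \<Rightarrow> bool" where
  "integral_at p E \<longleftrightarrow> (\<forall>i. p_integral p (coeff (fst E) i) \<and> p_integral p (coeff (snd E) i))"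

definition minimal_at :: "nat \<Rightarrow> weq \<Rightarrow> bool" where
  "minimal_at p E \<longleftrightarrow> is_weq E \<and> integral_at p E \<and>
     (\<forall>E'. is_weq E' \<and> same_curve E E' \<and> integral_at p E' \<longrightarrow>
            rat_val p (weq_disc E) \<le> rat_val p (weq_disc E'))"

definition globally_minimal :: "weq \<Rightarrow> bool" where
  "globally_minimal E \<longleftrightarrow> (\<forall>p. prime p \<longrightarrow> minimal_at p E)"

(* Q-rational Weierstrass points, recorded by their x-coordinate in P^1(Q) (None = infinity):
   the roots of the binary sextic form attached to 4P + Q^2. *)
definition rat_weierstrass_points :: "weq \<Rightarrow> rat option set" where
  "rat_weierstrass_points E =
     (let f = Polynomial.smult 4 (fst E) + (snd E)^2 in
       Some ` {r. poly f r = 0} \<union> (if degree f < 6 then {None} else {}))"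

abbreviation rpoly :: "int poly \<Rightarrow> rat poly" where
  "rpoly f \<equiv> map_poly of_int f"

end

theory Submission
  imports Defs "Subresultants.Subresultant"
begin

(* Since 4P + Q^2 has degree 5, infinity is a rational Weierstrass point, so another one is a
   rational root r of 4P + Q^2, and r = s/4 by the rational root theorem. The change of variables
   u = 4x - s, v = 32y + 16Q(x) gives v^2 = 256 (4P + Q^2)((u + s)/4), whose right-hand side is
   monic with integer coefficients and vanishes at u = 0. An affine change of variables multiplies
   the discriminant by e^20/a^30 = 32^20/4^30 = 2^40, a unit at odd primes; since changes of
   variables compose, every equation of the curve is also reached from the given one, so
   minimality at odd primes carries over. *)

section \<open>Resultants and discriminants under affine substitution\<close>

lemma resultant_euclid_step:
  fixes F B G H :: "'a :: idom poly"
  assumes FGH: "F + B * G = H" and deg_FG: "degree F \<ge> degree G"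
    and deg_GH: "degree G > degree H" and "H \<noteq> 0"
  shows "resultant F G
    = (-1) ^ (degree F * degree G) * lead_coeff G ^ (degree F - degree H) * resultant G H"
proof (cases "degree H = 0")
  case False
  from BT_lemma_1_12[OF FGH deg_FG, of 0] deg_GH False
  have "subresultant 0 F G = Polynomial.smult
      ((-1) ^ (degree F * degree G) * lead_coeff G ^ (degree F - degree H)) (subresultant 0 G H)"
    by auto
  from arg_cong[OF this, of "\<lambda>x. coeff x 0"] show ?thesis
    by (simp add: coeff_subresultant_0_0_resultant)
next
  case True
  then obtain h where h: "H = [:h:]" by (metis degree_0_id)
  from BT_lemma_1_13'[OF FGH deg_FG, of 0] deg_GH True \<open>H \<noteq> 0\<close>
  have "subresultant 0 F G = Polynomial.smult ((-1) ^ (degree F * degree G)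
      * lead_coeff G ^ degree F * lead_coeff H ^ (degree G - 1)) H"
    by auto
  from arg_cong[OF this, of "\<lambda>x. coeff x 0"] True h deg_GH show ?thesis
    by (simp add: coeff_subresultant_0_0_resultant)
      (metis Suc_pred mult.commute power_Suc)
qed

lemma resultant_multiple_eq_0:
  fixes F B G :: "'a :: idom poly"
  assumes "F = B * G" "degree F \<ge> degree G" "degree G > 0"
  shows "resultant F G = 0"
  using subresultant_product[OF assms(1,2), of 0] assms(3)
  by (simp add: subresultant_resultant)

(* The left-hand side is lead_coeff (pcompose p [:r, al:]) in simp normal form. *)
lemma lead_coeff_pcompose_linear:
  fixes p :: "'a :: idom poly"
  assumes "al \<noteq> 0"
  shows "coeff (pcompose p [:r, al:]) (degree p) = lead_coeff p * al ^ degree p"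
  using lead_coeff_comp[of "[:r, al:]" p] assms by simp

lemma resultant_pcompose_linear_ge:
  fixes F G :: "'a :: field poly"
  assumes al: "al \<noteq> 0" and "degree G \<le> degree F"
  shows "resultant (pcompose F [:r, al:]) (pcompose G [:r, al:])
    = al ^ (degree F * degree G) * resultant F G"
  using assms(2)
proof (induction "degree G" arbitrary: F G rule: less_induct)
  \<comment> \<open>along the Euclidean algorithm, which commutes with the substitution\<close>
  case less
  let ?L = "[:r, al:]"
  show ?case
  proof (cases "degree G = 0")
    case True
    then obtain c where "G = [:c:]" by (metis degree_0_id)
    then show ?thesis using al by simp
  next
    case False
    define H where "H = F mod G"
    have FGH: "F + (- (F div G)) * G = H"
      unfolding H_def by (simp add: minus_div_mult_eq_mod)
    then have FGH_L: "pcompose F ?L + pcompose (- (F div G)) ?L * pcompose G ?L = pcompose H ?L"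
      by (metis pcompose_add pcompose_mult)
    show ?thesis
    proof (cases "H = 0")
      case True
      then have F: "F = (F div G) * G" and F_L: "pcompose F ?L = pcompose (F div G) ?L * pcompose G ?L"
        using FGH by (simp_all add: pcompose_mult[symmetric] eq_neg_iff_add_eq_0)
      have "resultant F G = 0"
        using resultant_multiple_eq_0[OF F] less.prems False by simp
      moreover have "resultant (pcompose F ?L) (pcompose G ?L) = 0"
        using resultant_multiple_eq_0[OF F_L] less.prems False al by simp
      ultimately show ?thesis by simp
    next
      case False
      have deg_H: "degree H < degree G"
        using degree_mod_less[of G F] \<open>degree G \<noteq> 0\<close> False unfolding H_def by fastforce
      have H_L: "pcompose H ?L \<noteq> 0"
        using False al by (simp add: pcompose_eq_0_iff)
      have IH: "resultant (pcompose G ?L) (pcompose H ?L) = al ^ (degree G * degree H) * resultant G H"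
        using less.hyps deg_H by simp
      have "resultant (pcompose F ?L) (pcompose G ?L) = (-1) ^ (degree F * degree G)
          * (lead_coeff G * al ^ degree G) ^ (degree F - degree H) * resultant (pcompose G ?L) (pcompose H ?L)"
        using resultant_euclid_step[OF FGH_L] less.prems deg_H H_L al
        by (simp add: lead_coeff_pcompose_linear)
      also have "\<dots> = al ^ (degree G * (degree F - degree H) + degree G * degree H)
          * ((-1) ^ (degree F * degree G) * lead_coeff G ^ (degree F - degree H) * resultant G H)"
        unfolding IH by (simp add: power_mult_distrib power_add power_mult mult_ac)
      also have "degree G * (degree F - degree H) + degree G * degree H = degree F * degree G"
        using deg_H less.prems by (simp add: diff_mult_distrib2)
      finally show ?thesis
        using resultant_euclid_step[OF FGH less.prems deg_H False] by simp
    qed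
  qed
qed

lemma resultant_pcompose_linear:
  fixes F G :: "'a :: field poly"
  assumes al: "al \<noteq> 0"
  shows "resultant (pcompose F [:r, al:]) (pcompose G [:r, al:])
    = al ^ (degree F * degree G) * resultant F G"
proof (cases "degree G \<le> degree F")
  case False
  then have "resultant (pcompose G [:r, al:]) (pcompose F [:r, al:])
      = al ^ (degree F * degree G) * resultant G F"
    using resultant_pcompose_linear_ge[OF al] by (simp add: mult.commute)
  then show ?thesis
    using al by (subst (1 2) resultant_swap) simp
qed (use resultant_pcompose_linear_ge[OF al] in simp)

lemma poly_disc_smult_pcompose_linear:
  fixes f :: "rat poly"
  assumes al: "al \<noteq> 0" and c: "c \<noteq> 0" and "degree f > 0"
  shows "poly_disc (Polynomial.smult c (pcompose f [:r, al:]))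
    = c ^ (2 * (degree f - 1)) * al ^ (degree f * (degree f - 1)) * poly_disc f"
proof -
  let ?L = "[:r, al:]"
  have lc: "lead_coeff (Polynomial.smult c (pcompose f ?L)) = c * (lead_coeff f * al ^ degree f)"
    using lead_coeff_pcompose_linear[OF al, of f r] al c by simp
  have "lead_coeff f \<noteq> 0" using \<open>degree f > 0\<close> by auto
  obtain m where m: "degree f = Suc m" using \<open>degree f > 0\<close> gr0_conv_Suc by blast
  have "pderiv (Polynomial.smult c (pcompose f ?L))
      = Polynomial.smult (c * al) (pcompose (pderiv f) ?L)"
    by (simp add: pderiv_smult pderiv_pcompose pderiv_pCons)
  then have "resultant (Polynomial.smult c (pcompose f ?L)) (pderiv (Polynomial.smult c (pcompose f ?L)))
      = c ^ m * ((c * al) ^ Suc m * (al ^ (Suc m * m) * resultant f (pderiv f)))"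
    using c al m
    by (simp add: resultant_smult_left resultant_smult_right resultant_pcompose_linear degree_pderiv)
  then show ?thesis
    using al c m lc \<open>lead_coeff f \<noteq> 0\<close> unfolding poly_disc_def Let_def
    by (simp add: field_simps power_mult_distrib power_add mult_2 mult_2_right)
qed

lemma sextic_disc_smult_pcompose_linear:
  "sextic_disc (Polynomial.smult c (pcompose f [:r, al:])) = c ^ 10 * al ^ 30 * sextic_disc f"
proof (cases "c = 0 \<or> al = 0")
  case True
  then show ?thesis by (auto simp: sextic_disc_def pcompose_pCons)
next
  case False
  then have al: "al \<noteq> 0" and c: "c \<noteq> 0" by auto
  have deg: "degree (Polynomial.smult c (pcompose f [:r, al:])) = degree f"
    using al c by simp
  have lc: "lead_coeff (Polynomial.smult c (pcompose f [:r, al:])) = c * lead_coeff f * al ^ degree f"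
    using lead_coeff_pcompose_linear[OF al, of f r] al c by simp
  consider "degree f = 6" | "degree f = 5" | "degree f \<noteq> 5" "degree f \<noteq> 6" by blast
  then show ?thesis
  proof cases
    case 1
    then show ?thesis
      using poly_disc_smult_pcompose_linear[OF al c] unfolding sextic_disc_def deg by simp
  next
    case 2
    then show ?thesis
      using poly_disc_smult_pcompose_linear[OF al c] unfolding sextic_disc_def lc unfolding deg
      by (simp add: eval_nat_numeral algebra_simps)
  next
    case 3
    then show ?thesis unfolding sextic_disc_def deg by simp
  qed
qed

section \<open>Changes of variables\<close>

lemma pcompose_power: "pcompose (p ^ n) q = pcompose p q ^ n"
  for p q :: "'a :: comm_semiring_1 poly"
  by (induction n) (simp_all add: pcompose_mult pcompose_1)

lemma pcompose_as_sum:
  fixes f q :: "'a :: comm_semiring_1 poly"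
  assumes "degree f \<le> n"
  shows "pcompose f q = (\<Sum>i\<le>n. Polynomial.smult (coeff f i) (q ^ i))"
proof -
  have "pcompose f q = pcompose (\<Sum>i\<le>n. monom (coeff f i) i) q"
    using poly_as_sum_of_monoms'[OF assms] by simp
  then show ?thesis
    by (simp add: pcompose_sum monom_altdef pcompose_smult pcompose_power)
qed

lemma hom_subst_affine:
  assumes "degree f \<le> n"
  shows "hom_subst n a b 0 1 f = pcompose f [:b, a:]"
  unfolding hom_subst_def pcompose_as_sum[OF assms] by (simp add: one_pCons[symmetric])

lemma hom_subst_pcompose:
  "pcompose (hom_subst n a b c d f) [:be, al:]
    = hom_subst n (a * al) (b + a * be) (c * al) (d + c * be) f"
proof -
  have "pcompose [:y, x:] [:be, al:] = [:x * be + y, x * al:]" for x y :: rat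
    by (simp add: pcompose_pCons algebra_simps)
  then show ?thesis
    unfolding hom_subst_def by (simp add: pcompose_sum pcompose_smult pcompose_mult pcompose_power)
qed

(* Not a simp rule (it loops with mult_pCons_left): it is unfolded to transport the ring
   identities below to polynomials. *)
lemma smult_eq_const_mult: "Polynomial.smult c p = [:c:] * p"
  by simp

lemma completing_square_identity:
  fixes H A B e Q P :: "'a :: comm_ring_1"
  assumes "2 * H + A = e * Q" "H ^ 2 + A * H - B = - (e ^ 2 * P)"
  shows "4 * B + A ^ 2 = e ^ 2 * (4 * P + Q ^ 2)"
proof -
  have "4 * B + A ^ 2 = (2 * H + A) ^ 2 - 4 * (H ^ 2 + A * H - B)"
    by (simp add: algebra_simps power2_eq_square)
  then show ?thesis unfolding assms by (simp add: algebra_simps power2_eq_square)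
qed

lemma change_of_variables_compose_identity:
  fixes H1 H2 A B T W e1 e2 Q P :: "'a :: comm_ring_1"
  assumes "2 * H1 + A = e1 * Q" "H1 ^ 2 + A * H1 - B = - (e1 ^ 2 * P)"
    and "2 * H2 + T = e2 * A" "H2 ^ 2 + T * H2 - W = - (e2 ^ 2 * B)"
  shows "2 * (H2 + e2 * H1) + T = (e2 * e1) * Q"
    and "(H2 + e2 * H1) ^ 2 + T * (H2 + e2 * H1) - W = - ((e2 * e1) ^ 2 * P)"
proof -
  have T: "T = e2 * A - 2 * H2" and W: "W = H2 ^ 2 + T * H2 + e2 ^ 2 * B"
    using assms(3,4) by (simp_all add: algebra_simps)
  have A: "A = e1 * Q - 2 * H1" and B: "B = H1 ^ 2 + A * H1 + e1 ^ 2 * P"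
    using assms(1,2) by (simp_all add: algebra_simps)
  show "2 * (H2 + e2 * H1) + T = (e2 * e1) * Q"
    unfolding T A by (simp add: algebra_simps)
  show "(H2 + e2 * H1) ^ 2 + T * (H2 + e2 * H1) - W = - ((e2 * e1) ^ 2 * P)"
    unfolding W T B A by (simp add: algebra_simps power2_eq_square)
qed

(* y' = 2y + Q turns y^2 + Q y = P into y'^2 = 4P + Q^2. *)
definition weq_sextic :: "weq \<Rightarrow> rat poly" where
  "weq_sextic E = Polynomial.smult 4 (fst E) + (snd E) ^ 2"

lemma weq_disc_eq: "weq_disc E = sextic_disc (weq_sextic E) / 2 ^ 12"
  unfolding weq_disc_def weq_sextic_def ..

lemma rat_weierstrass_points_eq:
  "rat_weierstrass_points E
    = Some ` {r. poly (weq_sextic E) r = 0} \<union> (if degree (weq_sextic E) < 6 then {None} else {})"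
  unfolding rat_weierstrass_points_def weq_sextic_def Let_def ..

lemma rat_weierstrass_points_root:
  assumes "card (rat_weierstrass_points E) \<ge> 2"
  shows "\<exists>r. poly (weq_sextic E) r = 0"
proof (rule ccontr)
  assume "\<nexists>r. poly (weq_sextic E) r = 0"
  then have "rat_weierstrass_points E = (if degree (weq_sextic E) < 6 then {None} else {})"
    unfolding rat_weierstrass_points_eq by simp
  with assms show False by (simp split: if_splits)
qed

lemma weq_change_affine_sextic:
  assumes "weq_change al be 0 1 e H E E'" "degree (snd E') \<le> 3" "degree (fst E') \<le> 6"
  shows "pcompose (weq_sextic E') [:be, al:] = Polynomial.smult (e ^ 2) (weq_sextic E)"
proof -
  obtain P Q P' Q' where E: "E = (P, Q)" and E': "E' = (P', Q')" by fastforce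
  define A where "A = pcompose Q' [:be, al:]"
  define B where "B = pcompose P' [:be, al:]"
  have "Polynomial.smult 2 H + A = Polynomial.smult e Q"
    and "H ^ 2 + A * H - B = - Polynomial.smult (e ^ 2) P"
    using assms unfolding weq_change_def E E' A_def B_def by (simp_all add: hom_subst_affine)
  then have "Polynomial.smult 4 B + A ^ 2 = Polynomial.smult (e ^ 2) (Polynomial.smult 4 P + Q ^ 2)"
    unfolding smult_eq_const_mult numeral_poly[symmetric] poly_const_pow[symmetric]
    by (rule completing_square_identity)
  then show ?thesis
    unfolding weq_sextic_def E E' A_def B_def by (simp add: pcompose_add pcompose_smult pcompose_power)
qed

lemma weq_disc_affine_change:
  assumes ch: "weq_change al be 0 1 e H E E'" and "degree (snd E') \<le> 3" "degree (fst E') \<le> 6"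
  shows "weq_disc E' = e ^ 20 / al ^ 30 * weq_disc E"
proof -
  have "al \<noteq> 0" "e \<noteq> 0" using ch unfolding weq_change_def by auto
  have "weq_sextic E = Polynomial.smult (1 / e ^ 2) (pcompose (weq_sextic E') [:be, al:])"
    using weq_change_affine_sextic[OF assms] \<open>e \<noteq> 0\<close> by simp
  then have "sextic_disc (weq_sextic E) = (1 / e ^ 2) ^ 10 * al ^ 30 * sextic_disc (weq_sextic E')"
    by (simp add: sextic_disc_smult_pcompose_linear)
  then show ?thesis
    using \<open>al \<noteq> 0\<close> \<open>e \<noteq> 0\<close> unfolding weq_disc_eq by (simp add: field_simps power_mult_distrib flip: power_mult)
qed

lemma weq_change_complete_square:
  assumes "al \<noteq> 0" "e \<noteq> 0" "degree G \<le> 6"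
    and "pcompose G [:be, al:] = Polynomial.smult (e ^ 2 / 4) (weq_sextic E)"
  shows "weq_change al be 0 1 e (Polynomial.smult (e / 2) (snd E)) E (G, 0)"
  using assms unfolding weq_change_def weq_sextic_def
  by (simp add: hom_subst_affine smult_add_right algebra_simps power2_eq_square)

(* With the first change affine, substituting it into the second is plain composition with
   [:be, al:]; for a general Moebius map hom_subst would have to be composed. *)
lemma weq_change_compose_affine:
  assumes ch1: "weq_change al be 0 1 e1 H1 E1 E2"
    and deg: "degree (snd E2) \<le> 3" "degree (fst E2) \<le> 6"
    and ch2: "weq_change a b c d e2 H2 E2 E3"
  shows "weq_change (a * al) (b + a * be) (c * al) (d + c * be) (e2 * e1)
           (pcompose H2 [:be, al:] + Polynomial.smult e2 H1) E1 E3"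
proof -
  obtain P1 Q1 P2 Q2 P3 Q3 where E: "E1 = (P1, Q1)" "E2 = (P2, Q2)" "E3 = (P3, Q3)"
    by (metis surj_pair)
  let ?L = "[:be, al:]"
  define K where "K = pcompose H2 ?L"
  define T where "T = hom_subst 3 (a * al) (b + a * be) (c * al) (d + c * be) Q3"
  define W where "W = hom_subst 6 (a * al) (b + a * be) (c * al) (d + c * be) P3"
  have "al \<noteq> 0" "e1 \<noteq> 0"
    and first_Q: "Polynomial.smult 2 H1 + pcompose Q2 ?L = Polynomial.smult e1 Q1"
    and first_P: "H1 ^ 2 + pcompose Q2 ?L * H1 - pcompose P2 ?L = - Polynomial.smult (e1 ^ 2) P1"
    using ch1 deg unfolding weq_change_def E by (auto simp: hom_subst_affine)
  have "a * d - b * c \<noteq> 0" "e2 \<noteq> 0"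
    and "Polynomial.smult 2 H2 + hom_subst 3 a b c d Q3 = Polynomial.smult e2 Q2"
    and "H2 ^ 2 + hom_subst 3 a b c d Q3 * H2 - hom_subst 6 a b c d P3 = - Polynomial.smult (e2 ^ 2) P2"
    using ch2 unfolding weq_change_def E by auto
  from this(3,4) have second_Q: "Polynomial.smult 2 K + T = Polynomial.smult e2 (pcompose Q2 ?L)"
    and second_P: "K ^ 2 + T * K - W = - Polynomial.smult (e2 ^ 2) (pcompose P2 ?L)"
    unfolding K_def T_def W_def hom_subst_pcompose[symmetric]
    by (metis pcompose_add pcompose_smult, metis pcompose_add pcompose_diff pcompose_mult pcompose_power
          pcompose_uminus pcompose_smult)
  note eqs = first_Q first_P second_Q second_P
  note identity = change_of_variables_compose_identity[OF eqs
      [unfolded smult_eq_const_mult numeral_poly[symmetric] poly_const_pow[symmetric]]]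
  show ?thesis
    unfolding weq_change_def E fst_conv snd_conv K_def[symmetric] T_def[symmetric] W_def[symmetric]
  proof (intro conjI)
    show "a * al * (d + c * be) - (b + a * be) * (c * al) \<noteq> 0"
      using \<open>a * d - b * c \<noteq> 0\<close> \<open>al \<noteq> 0\<close> by (simp add: algebra_simps)
    show "e2 * e1 \<noteq> 0" using \<open>e1 \<noteq> 0\<close> \<open>e2 \<noteq> 0\<close> by simp
  qed (use identity in \<open>simp_all only: smult_eq_const_mult numeral_poly[symmetric]
      mult_to_poly[symmetric] poly_const_pow[symmetric]\<close>)
qed

lemma same_curve_trans_affine:
  assumes "weq_change al be 0 1 e H E1 E2" "degree (snd E2) \<le> 3" "degree (fst E2) \<le> 6"
    and "same_curve E2 E3"
  shows "same_curve E1 E3"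
  using assms weq_change_compose_affine unfolding same_curve_def by blast

lemma minimal_at_affine_change:
  assumes min: "minimal_at p E" and ch: "weq_change al be 0 1 e H E E'"
    and "is_weq E'" "integral_at p E'"
    and val: "rat_val p (weq_disc E') = rat_val p (weq_disc E)"
  shows "minimal_at p E'"
  unfolding minimal_at_def
proof (intro conjI allI impI)
  fix E'' assume E'': "is_weq E'' \<and> same_curve E' E'' \<and> integral_at p E''"
  then have "same_curve E E''"
    using same_curve_trans_affine[OF ch] \<open>is_weq E'\<close> unfolding is_weq_def by blast
  then have "rat_val p (weq_disc E) \<le> rat_val p (weq_disc E'')"
    using min E'' unfolding minimal_at_def by blast
  with val show "rat_val p (weq_disc E') \<le> rat_val p (weq_disc E'')" by simp
qed (use assms in auto)

section \<open>Integrality and valuations\<close>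

lemma rat_root_eq_int_div_lead_coeff:
  fixes f :: "int poly"
  assumes "f \<noteq> 0" and root: "poly (rpoly f) r = 0"
  shows "\<exists>s. r = of_int s / of_int (lead_coeff f)"
proof -
  obtain a b where q: "quotient_of r = (a, b)" by fastforce
  then have "b > 0" "coprime a b" and r: "r = of_int a / of_int b"
    by (simp_all add: quotient_of_denom_pos quotient_of_coprime quotient_of_div)
  let ?n = "degree f"
  let ?t = "\<lambda>i. coeff f i * a ^ i * b ^ (?n - i)"
  have summand: "of_int (coeff f i) * r ^ i * of_int b ^ ?n = (of_int (?t i) :: rat)" if "i \<le> ?n" for i
  proof -
    have "(of_int b :: rat) ^ ?n = of_int b ^ i * of_int b ^ (?n - i)"
      using that by (simp flip: power_add)
    then show ?thesis unfolding r using \<open>b > 0\<close> by (simp add: field_simps power_divide)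
  qed
  have "poly (rpoly f) r * of_int b ^ ?n = (\<Sum>i\<le>?n. of_int (coeff f i) * r ^ i * of_int b ^ ?n)"
    by (simp add: poly_altdef of_int_hom.coeff_map_poly_hom sum_distrib_right)
  also have "\<dots> = of_int (\<Sum>i\<le>?n. ?t i)"
    unfolding of_int_sum by (rule sum.cong) (simp_all add: summand)
  finally have "(\<Sum>i\<le>?n. ?t i) = 0"
    using root by (metis mult_zero_left of_int_eq_0_iff)
  then have "(\<Sum>i<?n. ?t i) + lead_coeff f * a ^ ?n = 0"
    by (simp add: lessThan_Suc_atMost[symmetric])
  moreover have "b dvd (\<Sum>i<?n. ?t i)"
    by (intro dvd_sum) simp
  ultimately have "b dvd lead_coeff f * a ^ ?n"
    by (metis add.commute add_eq_0_iff dvd_minus_iff)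
  then have "b dvd lead_coeff f"
    using \<open>coprime a b\<close> by (simp add: coprime_commute coprime_dvd_mult_left_iff)
  then obtain k where k: "lead_coeff f = b * k" by blast
  with \<open>f \<noteq> 0\<close> have "k \<noteq> 0" by auto
  have "r = of_int (a * k) / of_int (lead_coeff f)"
    unfolding r k using \<open>k \<noteq> 0\<close> by simp
  then show ?thesis by blast
qed

lemma rpoly_scaled_shift_exists:
  fixes p :: "int poly"
  assumes "degree p \<le> n" "k \<noteq> 0"
  shows "\<exists>q. rpoly q
    = Polynomial.smult (of_int k ^ n) (pcompose (rpoly p) [:of_int s / of_int k, 1 / of_int k:])"
proof -
  define q where "q = (\<Sum>i\<le>n. monom (coeff p i * k ^ (n - i)) i)"
  have "rpoly q = Polynomial.smult (of_int k ^ n) (pcompose (rpoly p) [:0, 1 / of_int k:])"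
  proof (rule poly_eqI)
    fix i
    show "coeff (rpoly q) i = coeff (Polynomial.smult (of_int k ^ n) (pcompose (rpoly p) [:0, 1 / of_int k:])) i"
    proof (cases "i \<le> n")
      case True
      then have "(of_int k :: rat) ^ n = of_int k ^ (n - i) * of_int k ^ i"
        by (simp flip: power_add)
      then show ?thesis
        using True \<open>k \<noteq> 0\<close>
        by (simp add: q_def coeff_pcompose_linear of_int_hom.coeff_map_poly_hom coeff_sum power_one_over)
    next
      case False
      then show ?thesis
        using assms(1) by (simp add: q_def coeff_pcompose_linear of_int_hom.coeff_map_poly_hom coeff_sum
            coeff_eq_0)
    qed
  qed
  moreover have "pcompose (rpoly p) [:of_int s / of_int k, 1 / of_int k:]
      = pcompose (pcompose (rpoly p) [:0, 1 / of_int k:]) [:of_int s, 1:]"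
    unfolding pcompose_assoc[symmetric] by (simp add: pcompose_pCons)
  ultimately have "rpoly (pcompose q [:s, 1:])
      = Polynomial.smult (of_int k ^ n) (pcompose (rpoly p) [:of_int s / of_int k, 1 / of_int k:])"
    by (simp add: of_int_hom.map_poly_pcompose pcompose_smult)
  then show ?thesis by blast
qed

lemma rat_val_of_int: "rat_val p (of_int k) = int (multiplicity (int p) k)"
  by (simp add: rat_val_def)

lemma rat_val_of_int_mult_nondvd:
  assumes "prime p" "\<not> int p dvd k" "D \<noteq> 0"
  shows "rat_val p (of_int k * of_int D) = rat_val p (of_int D)"
proof -
  have "k \<noteq> 0" using assms(2) by auto
  then show ?thesis
    using assms unfolding of_int_mult[symmetric] rat_val_of_int
    by (simp add: prime_elem_multiplicity_mult_distrib not_dvd_imp_multiplicity_0)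
qed

lemma rat_val_two_power_mult:
  assumes "prime p" "p \<noteq> 2" "D \<noteq> 0"
  shows "rat_val p (2 ^ n * of_int D) = rat_val p (of_int D)"
proof -
  have "\<not> int p dvd 2 ^ n"
  proof
    assume "int p dvd 2 ^ n"
    then have "int p dvd 2" using prime_dvd_power[of "int p"] assms(1) by simp
    then have "p dvd 2" by (metis int_dvd_int_iff of_nat_numeral)
    then show False using assms primes_dvd_imp_eq two_is_prime_nat by blast
  qed
  moreover have "(2 :: rat) ^ n = of_int (2 ^ n)" by simp
  ultimately show ?thesis
    using rat_val_of_int_mult_nondvd[OF assms(1) _ assms(3)] by metis
qed

lemma integral_at_rpoly: "p \<noteq> 1 \<Longrightarrow> integral_at p (rpoly A, rpoly B)"
  by (simp add: integral_at_def p_integral_def of_int_hom.coeff_map_poly_hom)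

section \<open>The integral model of a quintic with a rational Weierstrass point\<close>

lemma weq_sextic_rpoly: "weq_sextic (rpoly P, rpoly Q) = rpoly (Polynomial.smult 4 P + Q ^ 2)"
  by (simp add: weq_sextic_def of_int_poly_hom.hom_add of_int_hom.map_poly_hom_smult
      of_int_poly_hom.hom_power)

lemma quintic_sextic_degree:
  fixes P Q :: "int poly"
  assumes "degree P = 5" "lead_coeff P = 1" "degree Q \<le> 2"
  shows "degree (Polynomial.smult 4 P + Q ^ 2) = 5" "lead_coeff (Polynomial.smult 4 P + Q ^ 2) = 4"
proof -
  have "degree (Q ^ 2) \<le> 4" using degree_power_le[of Q 2] assms(3) by linarith
  then show "degree (Polynomial.smult 4 P + Q ^ 2) = 5"
    using assms(1) by (subst degree_add_eq_left) auto
  then show "lead_coeff (Polynomial.smult 4 P + Q ^ 2) = 4"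
    using assms(1,2) \<open>degree (Q ^ 2) \<le> 4\<close> by (simp add: coeff_eq_0)
qed

lemma quintic_sextic_root_quarter:
  fixes P Q :: "int poly"
  assumes "degree P = 5" "lead_coeff P = 1" "degree Q \<le> 2"
    and "poly (weq_sextic (rpoly P, rpoly Q)) r = 0"
  shows "\<exists>s. r = of_int s / 4"
proof -
  define f where "f = Polynomial.smult 4 P + Q ^ 2"
  have "f \<noteq> 0" "lead_coeff f = 4"
    using quintic_sextic_degree[OF assms(1-3)] unfolding f_def by auto
  moreover have "poly (rpoly f) r = 0"
    using assms(4) unfolding f_def weq_sextic_rpoly .
  ultimately show ?thesis
    using rat_root_eq_int_div_lead_coeff[of f r] by simp
qed

(* 256 f((u + s)/4) = 4^5 P((u + s)/4) + (4^2 Q((u + s)/4))^2 is integral, monic, and vanishes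
   at u = 0. *)
lemma shifted_quintic_int_model:
  fixes P Q :: "int poly"
  assumes degP: "degree P = 5" and monicP: "lead_coeff P = 1" and degQ: "degree Q \<le> 2"
    and root: "poly (weq_sextic (rpoly P, rpoly Q)) (of_int s / 4) = 0"
  shows "\<exists>F. degree F = 4 \<and> lead_coeff F = 1 \<and>
    pcompose (rpoly ([:0, 1:] * F)) [:- of_int s, 4:] = Polynomial.smult 256 (weq_sextic (rpoly P, rpoly Q))"
proof -
  let ?f = "weq_sextic (rpoly P, rpoly Q)"
  let ?L = "[:of_int s / 4, 1 / 4 :: rat:]"
  define G where "G = Polynomial.smult 256 (pcompose ?f ?L)"
  have G_inv: "pcompose G [:- of_int s, 4:] = Polynomial.smult 256 ?f"
    unfolding G_def pcompose_smult pcompose_assoc[symmetric]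
    by (simp add: pcompose_pCons) (metis one_pCons pcompose_idR)
  obtain A B where A: "rpoly A = Polynomial.smult (of_int 4 ^ 5) (pcompose (rpoly P) ?L)"
    and B: "rpoly B = Polynomial.smult (of_int 4 ^ 2) (pcompose (rpoly Q) ?L)"
    using rpoly_scaled_shift_exists[of P 5 4 s] rpoly_scaled_shift_exists[of Q 2 4 s] degP degQ
    by auto
  define g where "g = A + B ^ 2"
  have g: "rpoly g = G"
    unfolding G_def weq_sextic_def g_def
    by (simp add: A B of_int_poly_hom.hom_add of_int_poly_hom.hom_power pcompose_add pcompose_smult
        pcompose_power smult_add_right smult_power)
  have "degree ?f = 5" "lead_coeff ?f = 4"
    using quintic_sextic_degree[OF degP monicP degQ] unfolding weq_sextic_rpoly by simp_all
  then have "degree G = 5" "lead_coeff G = 1" "poly G 0 = 0"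
    using lead_coeff_pcompose_linear[of "1 / 4 :: rat" ?f "of_int s / 4"] root
    by (simp_all add: G_def poly_pcompose power_one_over)
  then have "degree g = 5" "lead_coeff g = 1" "poly g 0 = 0"
    unfolding g[symmetric]
    by (metis of_int_hom.degree_map_poly_hom, metis of_int_hom.coeff_map_poly_hom
        of_int_hom.degree_map_poly_hom of_int_eq_1_iff, metis of_int_hom.poly_map_poly of_int_eq_0_iff of_int_0)
  moreover obtain F where F: "g = [:0, 1:] * F"
    using \<open>poly g 0 = 0\<close> dvd_iff_poly_eq_0[of 0 g] by auto
  ultimately have "degree F = 4" "lead_coeff F = 1"
    by (auto split: if_splits simp: numeral_eq_Suc)
  then show ?thesis
    using G_inv g F by metis
qed

theorem lemma3p1:
  fixes P Q :: "int poly"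
  assumes weq: "is_weq (rpoly P, rpoly Q)"
    and degQ: "degree Q \<le> 2"
    and degP: "degree P = 5" and monicP: "lead_coeff P = 1"
    and glob_min: "globally_minimal (rpoly P, rpoly Q)"
    and odd_disc: "\<exists>D::int. weq_disc (rpoly P, rpoly Q) = of_int D \<and> odd D"
    and two_wpts: "card (rat_weierstrass_points (rpoly P, rpoly Q)) \<ge> 2"
  shows "\<exists>F :: int poly. degree F = 4 \<and> lead_coeff F = 1 \<and>
           is_weq (rpoly ([:0, 1:] * F), 0) \<and>
           same_curve (rpoly P, rpoly Q) (rpoly ([:0, 1:] * F), 0) \<and>
           weq_disc (rpoly ([:0, 1:] * F), 0) = 2 ^ 40 * weq_disc (rpoly P, rpoly Q) \<and>
           (\<forall>p. prime p \<and> p \<noteq> 2 \<longrightarrow> minimal_at p (rpoly ([:0, 1:] * F), 0))"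
proof -
  let ?E = "(rpoly P, rpoly Q)"
  obtain r where "poly (weq_sextic ?E) r = 0"
    using rat_weierstrass_points_root[OF two_wpts] by blast
  moreover obtain s where "r = of_int s / 4"
    using quintic_sextic_root_quarter[OF degP monicP degQ] calculation by blast
  ultimately obtain F where F: "degree F = 4" "lead_coeff F = 1"
    and G: "pcompose (rpoly ([:0, 1:] * F)) [:- of_int s, 4:] = Polynomial.smult 256 (weq_sextic ?E)"
    using shifted_quintic_int_model[OF degP monicP degQ] by blast
  define G where "G = rpoly ([:0, 1:] * F)"
  have "degree G = 5" using F unfolding G_def by (cases "F = 0") (auto simp: degree_mult_eq)
  have ch: "weq_change 4 (- of_int s) 0 1 32 (Polynomial.smult 16 (rpoly Q)) ?E (G, 0)"
    using weq_change_complete_square[of 4 32 G "- of_int s" ?E] G \<open>degree G = 5\<close>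
    unfolding G_def by simp
  have disc: "weq_disc (G, 0) = 2 ^ 40 * weq_disc ?E"
    using weq_disc_affine_change[OF ch] \<open>degree G = 5\<close> by simp
  have "is_weq (G, 0)"
    using weq disc \<open>degree G = 5\<close> unfolding is_weq_def by simp
  obtain D :: int where D: "weq_disc ?E = of_int D" "D \<noteq> 0"
    using odd_disc by fastforce
  have "minimal_at p (G, 0)" if "prime p" "p \<noteq> 2" for p
  proof (rule minimal_at_affine_change[OF _ ch \<open>is_weq (G, 0)\<close>])
    show "minimal_at p ?E" using glob_min \<open>prime p\<close> unfolding globally_minimal_def by blast
    show "integral_at p (G, 0)"
      using integral_at_rpoly[of p _ 0] \<open>prime p\<close> unfolding G_def by force
    show "rat_val p (weq_disc (G, 0)) = rat_val p (weq_disc ?E)"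
      unfolding disc D(1) by (rule rat_val_two_power_mult[OF that \<open>D \<noteq> 0\<close>])
  qed
  moreover have "same_curve ?E (G, 0)" using ch unfolding same_curve_def by blast
  ultimately show ?thesis
    using F disc \<open>is_weq (G, 0)\<close> by (intro exI[of _ F]) (unfold G_def[symmetric], blast)
qed

end
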